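(* Let $\mathbf A \in \mathbb{H}^{M\times K}$, $\mathbf C \in \mathbb{H}^{K\times N}$, let $\mathbf b \in \mathbb{H}^{K\times 1}$ and let $\mathbf B = \operatorname{diag}(\mathbf b)\in\mathbb{H}^{K\times K}$. Then $$\begin{aligned} \operatorname{vec}\big(\mathbf A \cdot_{\mathrm L} [\mathbf B \cdot_{\mathrm R} \mathbf C]\big) &= (\mathbf C^{\mathrm T} \diamond_{\mathrm R} \mathbf A)\cdot_{\mathrm L} \mathbf b,\\ \operatorname{vec}\big(\mathbf A \cdot_{\mathrm R} [\mathbf B \cdot_{\mathrm L} \mathbf C]\big) &= (\mathbf C^{\mathrm T} \diamond_{\mathrm L} \mathbf A)\cdot_{\mathrm R} \mathbf b,\\ \operatorname{vec}\big([\mathbf A \cdot_{\mathrm L} \mathbf B] \cdot_{\mathrm R} \mathbf C\big) &= (\mathbf C^{\mathrm T} \diamond_{\mathrm L} \mathbf A)\cdot_{\mathrm L} \mathbf b,\\ \operatorname{vec}\big([\mathbf A \cdot_{\mathrm R} \mathbf B] \cdot_{\mathrm L} \mathbf C\big) &= (\mathbf C^{\mathrm T} \diamond_{\mathrm R} \mathbf A)\cdot_{\mathrm R} \mathbf b. \end{aligned}$$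
   Context: $\mathbb{H}$ denotes the skew field of real quaternions and $^{\mathrm T}$ the (non-conjugating) transpose. $\operatorname{diag}(\mathbf b)$ is the square matrix with the entries of $\mathbf b$ on its main diagonal and zeros elsewhere. For quaternion matrices, the left matrix product is $[\mathbf X \cdot_{\mathrm L} \mathbf Y]_{m,n} = \sum_{k} [\mathbf X]_{m,k}[\mathbf Y]_{k,n}$ and the right matrix product is $[\mathbf X \cdot_{\mathrm R} \mathbf Y]_{m,n} = \sum_{k} [\mathbf Y]_{k,n}[\mathbf X]_{m,k}$ (vectors are one-column matrices). For $\mathbf X\in\mathbb{H}^{P\times Q}$, $\operatorname{vec}(\mathbf X)\in\mathbb{H}^{PQ\times 1}$ is the column-stacking vectorization, $[\operatorname{vec}(\mathbf X)]_{p+(q-1)P} = [\mathbf X]_{p,q}$. The left Kronecker product $\mathbf X \otimes_{\mathrm L} \mathbf Y$ is the block matrix whose $(i,j)$ block is $[\mathbf X]_{i,j}\,\mathbf Y$; the right Kronecker product $\mathbf X \otimes_{\mathrm R} \mathbf Y$ is the block matrix whose $(i,j)$ block is $\mathbf Y\,[\mathbf X]_{i,j}$. For matrices $\mathbf X = [\mathbf x_1,\dots,\mathbf x_K]$ and $\mathbf Y = [\mathbf y_1,\dots,\mathbf y_K]$ with the same number $K$ of columns, the left Khatri–Rao product is $\mathbf X \diamond_{\mathrm L} \mathbf Y = [\mathbf x_1 \otimes_{\mathrm L} \mathbf y_1,\dots,\mathbf x_K \otimes_{\mathrm L} \mathbf y_K]$ and the right Khatri–Rao product is $\mathbf X \diamond_{\mathrm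 R} \mathbf Y = [\mathbf x_1 \otimes_{\mathrm R} \mathbf y_1,\dots,\mathbf x_K \otimes_{\mathrm R} \mathbf y_K]$. *)

theory Defs
  imports Complex_Main "Jordan_Normal_Form.Matrix"
begin

datatype quat = Quat (Re: real) (Im1: real) (Im2: real) (Im3: real)

lemma quat_eq_iff: "x = y \<longleftrightarrow> Re x = Re y \<and> Im1 x = Im1 y \<and> Im2 x = Im2 y \<and> Im3 x = Im3 y"
  by (cases x; cases y) auto

instantiation quat :: ring_1
begin
definition "0 = Quat 0 0 0 0"
definition "1 = Quat 1 0 0 0"
definition "x + y = Quat (Re x + Re y) (Im1 x + Im1 y) (Im2 x + Im2 y) (Im3 x + Im3 y)"
definition "x - y = Quat (Re x - Re y) (Im1 x - Im1 y) (Im2 x - Im2 y) (Im3 x - Im3 y)"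
definition "- x = Quat (- Re x) (- Im1 x) (- Im2 x) (- Im3 x)"
definition "x * y = Quat
   (Re x * Re y - Im1 x * Im1 y - Im2 x * Im2 y - Im3 x * Im3 y)
   (Re x * Im1 y + Im1 x * Re y + Im2 x * Im3 y - Im3 x * Im2 y)
   (Re x * Im2 y - Im1 x * Im3 y + Im2 x * Re y + Im3 x * Im1 y)
   (Re x * Im3 y + Im1 x * Im2 y - Im2 x * Im1 y + Im3 x * Re y)"
instance
  by standard (simp_all add: quat_eq_iff zero_quat_def one_quat_def plus_quat_def
      minus_quat_def uminus_quat_def times_quat_def algebra_simps)
end

definition lprod :: "quat mat \<Rightarrow> quat mat \<Rightarrow> quat mat" where
  "lprod X Y = mat (dim_row X) (dim_col Y) (\<lambda>(m, n). \<Sum>k<dim_col X. X $$ (m, k) * Y $$ (k, n))"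

definition rprod :: "quat mat \<Rightarrow> quat mat \<Rightarrow> quat mat" where
  "rprod X Y = mat (dim_row X) (dim_col Y) (\<lambda>(m, n). \<Sum>k<dim_col X. Y $$ (k, n) * X $$ (m, k))"

definition diagm :: "quat mat \<Rightarrow> quat mat" where
  "diagm b = mat (dim_row b) (dim_row b) (\<lambda>(i, j). if i = j then b $$ (i, 0) else 0)"

definition vecm :: "quat mat \<Rightarrow> quat mat" where
  "vecm X = mat (dim_row X * dim_col X) 1
     (\<lambda>(i, _). X $$ (i mod dim_row X, i div dim_row X))"

text \<open>Kronecker products: block (i,j) is X(i,j) Y (left) resp. Y X(i,j) (right)\<close>
definition kronL :: "quat mat \<Rightarrow> quat mat \<Rightarrow> quat mat" where
  "kronL X Y = mat (dim_row X * dim_row Y) (dim_col X * dim_col Y)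
     (\<lambda>(a, c). X $$ (a div dim_row Y, c div dim_col Y) * Y $$ (a mod dim_row Y, c mod dim_col Y))"

definition kronR :: "quat mat \<Rightarrow> quat mat \<Rightarrow> quat mat" where
  "kronR X Y = mat (dim_row X * dim_row Y) (dim_col X * dim_col Y)
     (\<lambda>(a, c). Y $$ (a mod dim_row Y, c mod dim_col Y) * X $$ (a div dim_row Y, c div dim_col Y))"

definition colm :: "quat mat \<Rightarrow> nat \<Rightarrow> quat mat" where
  "colm X k = mat (dim_row X) 1 (\<lambda>(i, _). X $$ (i, k))"

definition khatriL :: "quat mat \<Rightarrow> quat mat \<Rightarrow> quat mat" where
  "khatriL X Y = mat (dim_row X * dim_row Y) (dim_col X)
     (\<lambda>(a, k). kronL (colm X k) (colm Y k) $$ (a, 0))"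

definition khatriR :: "quat mat \<Rightarrow> quat mat \<Rightarrow> quat mat" where
  "khatriR X Y = mat (dim_row X * dim_row Y) (dim_col X)
     (\<lambda>(a, k). kronR (colm X k) (colm Y k) $$ (a, 0))"

end

theory Submission
  imports Defs
begin

text \<open>Multiplying by \<open>diag(b)\<close> on either side just scales
  the \<open>k\<close>-th row or column by \<open>b\<^sub>k\<close> (on the side dictated by the product), and the entry of
  \<open>C\<^sup>T \<diamond> A\<close> at row \<open>p + qM\<close> and column \<open>k\<close> is \<open>A\<^sub>p\<^sub>k C\<^sub>k\<^sub>q\<close> or \<open>C\<^sub>k\<^sub>q A\<^sub>p\<^sub>k\<close>. So both sides
  of every identity have entry \<open>\<Sum>\<^sub>k\<close> of the same three factors in the same order.\<close>

lemma dim_lprod [simp]: "dim_row (lprod X Y) = dim_row X" "dim_col (lprod X Y) = dim_col Y"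
  by (simp_all add: lprod_def)

lemma dim_rprod [simp]: "dim_row (rprod X Y) = dim_row X" "dim_col (rprod X Y) = dim_col Y"
  by (simp_all add: rprod_def)

lemma index_lprod:
  "X \<in> carrier_mat m k \<Longrightarrow> i < m \<Longrightarrow> j < dim_col Y \<Longrightarrow>
    lprod X Y $$ (i, j) = (\<Sum>l<k. X $$ (i, l) * Y $$ (l, j))"
  by (simp add: lprod_def)

lemma index_rprod:
  "X \<in> carrier_mat m k \<Longrightarrow> i < m \<Longrightarrow> j < dim_col Y \<Longrightarrow>
    rprod X Y $$ (i, j) = (\<Sum>l<k. Y $$ (l, j) * X $$ (i, l))"
  by (simp add: rprod_def)

lemma dim_diagm [simp]: "dim_row (diagm b) = dim_row b" "dim_col (diagm b) = dim_row b"
  by (simp_all add: diagm_def)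

lemma index_rprod_diagm_left:
  "b \<in> carrier_mat K 1 \<Longrightarrow> C \<in> carrier_mat K N \<Longrightarrow> k < K \<Longrightarrow> q < N \<Longrightarrow>
    rprod (diagm b) C $$ (k, q) = C $$ (k, q) * b $$ (k, 0)"
  by (simp add: rprod_def diagm_def if_distrib[of "\<lambda>x. _ * x"] cong: if_cong)

lemma index_lprod_diagm_left:
  "b \<in> carrier_mat K 1 \<Longrightarrow> C \<in> carrier_mat K N \<Longrightarrow> k < K \<Longrightarrow> q < N \<Longrightarrow>
    lprod (diagm b) C $$ (k, q) = b $$ (k, 0) * C $$ (k, q)"
  by (simp add: lprod_def diagm_def if_distrib[of "\<lambda>x. x * _"] cong: if_cong)

lemma index_rprod_diagm_right:
  "b \<in> carrier_mat K 1 \<Longrightarrow> A \<in> carrier_mat M K \<Longrightarrow> p < M \<Longrightarrow> k < K \<Longrightarrow>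
    rprod A (diagm b) $$ (p, k) = b $$ (k, 0) * A $$ (p, k)"
  by (simp add: rprod_def diagm_def if_distrib[of "\<lambda>x. x * _"] cong: if_cong)

lemma index_lprod_diagm_right:
  "b \<in> carrier_mat K 1 \<Longrightarrow> A \<in> carrier_mat M K \<Longrightarrow> p < M \<Longrightarrow> k < K \<Longrightarrow>
    lprod A (diagm b) $$ (p, k) = A $$ (p, k) * b $$ (k, 0)"
  by (simp add: lprod_def diagm_def if_distrib[of "\<lambda>x. _ * x"] cong: if_cong)

lemma mod_div_less_mult:
  fixes i P Q :: nat
  assumes "i < P * Q"
  shows "i mod P < P" and "i div P < Q" and "i = i mod P + i div P * P"
proof -
  have "P > 0" using assms by (cases P) auto
  then show "i mod P < P" "i div P < Q" "i = i mod P + i div P * P"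
    using assms by (auto simp: less_mult_imp_div_less mult.commute)
qed

lemma vecm_eqI:
  assumes X: "X \<in> carrier_mat P Q" and Y: "Y \<in> carrier_mat (P * Q) 1"
    and entries: "\<And>p q. p < P \<Longrightarrow> q < Q \<Longrightarrow> Y $$ (p + q * P, 0) = X $$ (p, q)"
  shows "vecm X = Y"
proof (rule eq_matI)
  fix i j assume "i < dim_row Y" "j < dim_col Y"
  then have i: "i < P * Q" and "j = 0" using Y by auto
  then show "vecm X $$ (i, j) = Y $$ (i, j)"
    using X entries[OF mod_div_less_mult(1,2)[OF i]] mod_div_less_mult(3)[OF i]
    by (simp add: vecm_def)
qed (use X Y in \<open>auto simp: vecm_def\<close>)

lemma add_mult_less_mult: "p < M \<Longrightarrow> q < N \<Longrightarrow> p + q * M < M * (N :: nat)"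
  by (metis add.commute mult.commute mult_Suc_right nat_add_left_cancel_less
      less_eq_Suc_le mult_le_mono2 order_less_le_trans)

lemma index_khatriR_transpose:
  "A \<in> carrier_mat M K \<Longrightarrow> C \<in> carrier_mat K N \<Longrightarrow> p < M \<Longrightarrow> q < N \<Longrightarrow> k < K \<Longrightarrow>
    khatriR (transpose_mat C) A $$ (p + q * M, k) = A $$ (p, k) * C $$ (k, q)"
  by (simp add: khatriR_def kronR_def colm_def add_mult_less_mult mult.commute[of N M])

lemma index_khatriL_transpose:
  "A \<in> carrier_mat M K \<Longrightarrow> C \<in> carrier_mat K N \<Longrightarrow> p < M \<Longrightarrow> q < N \<Longrightarrow> k < K \<Longrightarrow>
    khatriL (transpose_mat C) A $$ (p + q * M, k) = C $$ (k, q) * A $$ (p, k)"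
  by (simp add: khatriL_def kronL_def colm_def add_mult_less_mult mult.commute[of N M])

context
  fixes A C b :: "quat mat" and M K N :: nat
  assumes A: "A \<in> carrier_mat M K" and C: "C \<in> carrier_mat K N" and b: "b \<in> carrier_mat K 1"
begin

lemma khatriR_transpose_carrier: "khatriR (transpose_mat C) A \<in> carrier_mat (M * N) K"
  using A C by (simp add: khatriR_def mult.commute)

lemma khatriL_transpose_carrier: "khatriL (transpose_mat C) A \<in> carrier_mat (M * N) K"
  using A C by (simp add: khatriL_def mult.commute)

lemma vecm_lprod_rprod_diagm_left:
  "vecm (lprod A (rprod (diagm b) C)) = lprod (khatriR (transpose_mat C) A) b"
proof (rule vecm_eqI)
  fix p q assume pq: "p < M" "q < N"
  have "lprod (khatriR (transpose_mat C) A) b $$ (p + q * M, 0) =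
      (\<Sum>k<K. A $$ (p, k) * C $$ (k, q) * b $$ (k, 0))"
    using pq b by (simp add: index_lprod[OF khatriR_transpose_carrier] add_mult_less_mult
        index_khatriR_transpose[OF A C])
  also have "\<dots> = lprod A (rprod (diagm b) C) $$ (p, q)"
    using pq A C b by (simp add: index_lprod index_rprod_diagm_left mult.assoc)
  finally show "lprod (khatriR (transpose_mat C) A) b $$ (p + q * M, 0) =
      lprod A (rprod (diagm b) C) $$ (p, q)" .
qed (use A C b khatriR_transpose_carrier in auto)

lemma vecm_rprod_lprod_diagm_left:
  "vecm (rprod A (lprod (diagm b) C)) = rprod (khatriL (transpose_mat C) A) b"
proof (rule vecm_eqI)
  fix p q assume pq: "p < M" "q < N"
  have "rprod (khatriL (transpose_mat C) A) b $$ (p + q * M, 0) =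
      (\<Sum>k<K. b $$ (k, 0) * (C $$ (k, q) * A $$ (p, k)))"
    using pq b by (simp add: index_rprod[OF khatriL_transpose_carrier] add_mult_less_mult
        index_khatriL_transpose[OF A C])
  also have "\<dots> = rprod A (lprod (diagm b) C) $$ (p, q)"
    using pq A C b by (simp add: index_rprod index_lprod_diagm_left mult.assoc)
  finally show "rprod (khatriL (transpose_mat C) A) b $$ (p + q * M, 0) =
      rprod A (lprod (diagm b) C) $$ (p, q)" .
qed (use A C b khatriL_transpose_carrier in auto)

lemma vecm_rprod_lprod_diagm_right:
  "vecm (rprod (lprod A (diagm b)) C) = lprod (khatriL (transpose_mat C) A) b"
proof (rule vecm_eqI)
  fix p q assume pq: "p < M" "q < N"
  have "lprod (khatriL (transpose_mat C) A) b $$ (p + q * M, 0) =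
      (\<Sum>k<K. C $$ (k, q) * A $$ (p, k) * b $$ (k, 0))"
    using pq b by (simp add: index_lprod[OF khatriL_transpose_carrier] add_mult_less_mult
        index_khatriL_transpose[OF A C])
  also have "\<dots> = rprod (lprod A (diagm b)) C $$ (p, q)"
  proof -
    have "lprod A (diagm b) \<in> carrier_mat M K" using A b by auto
    then show ?thesis
      using pq A C b by (simp add: index_rprod index_lprod_diagm_right mult.assoc)
  qed
  finally show "lprod (khatriL (transpose_mat C) A) b $$ (p + q * M, 0) =
      rprod (lprod A (diagm b)) C $$ (p, q)" .
qed (use A C b khatriL_transpose_carrier in auto)

lemma vecm_lprod_rprod_diagm_right:
  "vecm (lprod (rprod A (diagm b)) C) = rprod (khatriR (transpose_mat C) A) b"
proof (rule vecm_eqI)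
  fix p q assume pq: "p < M" "q < N"
  have "rprod (khatriR (transpose_mat C) A) b $$ (p + q * M, 0) =
      (\<Sum>k<K. b $$ (k, 0) * (A $$ (p, k) * C $$ (k, q)))"
    using pq b by (simp add: index_rprod[OF khatriR_transpose_carrier] add_mult_less_mult
        index_khatriR_transpose[OF A C])
  also have "\<dots> = lprod (rprod A (diagm b)) C $$ (p, q)"
  proof -
    have "rprod A (diagm b) \<in> carrier_mat M K" using A b by auto
    then show ?thesis
      using pq A C b by (simp add: index_lprod index_rprod_diagm_right mult.assoc)
  qed
  finally show "rprod (khatriR (transpose_mat C) A) b $$ (p + q * M, 0) =
      lprod (rprod A (diagm b)) C $$ (p, q)" .
qed (use A C b khatriR_transpose_carrier in auto)

end

theorem mainTheorem7:
  fixes A C b :: "quat mat" and M K N :: nat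
  assumes "A \<in> carrier_mat M K" and "C \<in> carrier_mat K N" and "b \<in> carrier_mat K 1"
  defines "B \<equiv> diagm b"
  shows "vecm (lprod A (rprod B C)) = lprod (khatriR (transpose_mat C) A) b \<and>
         vecm (rprod A (lprod B C)) = rprod (khatriL (transpose_mat C) A) b \<and>
         vecm (rprod (lprod A B) C) = lprod (khatriL (transpose_mat C) A) b \<and>
         vecm (lprod (rprod A B) C) = rprod (khatriR (transpose_mat C) A) b"
  unfolding B_def using assms
  by (simp add: vecm_lprod_rprod_diagm_left vecm_rprod_lprod_diagm_left
      vecm_rprod_lprod_diagm_right vecm_lprod_rprod_diagm_right)

end
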